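(* Let $X=\Gamma\backslash G$ be the compact solvmanifold described in the context and let $J$ be the almost-complex structure on $X$ whose $(1,0)$-forms are spanned by $\Phi^1=e^1+ie^2$, $\Phi^2=e^3+ie^4$, $\Phi^3=e^5+ie^6$. Then there is no symplectic form on $X$ compatible with $J$ (i.e. no closed non-degenerate real $2$-form $\omega$ with $\omega(J\cdot,J\cdot)=\omega$ and $\omega(\cdot,J\cdot)$ positive definite).
   Context: Let $G$ be the Lie group $\mathbb{R}^2\ltimes_\Phi\mathbb{R}^4$ with coordinates $(t,x,y_1,y_2,z_1,z_2)$ and product $(t,x,y_1,y_2,z_1,z_2)*(t',x',y_1',y_2',z_1',z_2')=(t+t',x+x',y_1'e^t+xz_1'e^t+y_1,\,y_2'e^{-t}+xz_2'e^{-t}+y_2,\,z_1'e^t+z_1,\,z_2'e^{-t}+z_2)$. Let $B\in SL(2,\mathbb{Z})$ have distinct eigenvalues $e^{a_0},e^{-a_0}$ ($a_0>0$) and $P$ real invertible with $PBP^{-1}=\mathrm{diag}(e^{a_0},e^{-a_0})$. Let $\Gamma$ be the lattice of elements with $t\in a_0\mathbb{Z}$, $x\in\mathbb{Z}$, $(y_1,y_2)=(m_1,m_2)P^t$, $(z_1,z_2)=(n_1,n_2)P^t$, $m_i,n_i\in\mathbb{Z}$, and $X=\Gamma\backslash G$. Left-invariant $1$-forms: $e^1=dt$, $e^2=dx$, $e^3=e^{-t}dy_1-xe^{-t}dz_1$, $e^4=e^{t}dy_2-xe^{t}dz_2$, $e^5=e^{-t}dz_1$, $e^6=e^tdz_2$,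 with $de^1=de^2=0$, $de^3=-e^{13}-e^{25}$, $de^4=e^{14}-e^{26}$, $de^5=-e^{15}$, $de^6=e^{16}$ ($e^{ij}=e^i\wedge e^j$). *)

theory Defs
  imports "HOL-Analysis.Analysis"
begin

text \<open>Points of G = R^2 \<ltimes> R^4 are vectors p :: real^6 with coordinates
  (t,x,y1,y2,z1,z2) = (p$0, p$1, p$2, p$3, p$4, p$5).  Tangent vectors are also real^6
  (coordinate components). Index convention for 2x2 matrices: first index 0, second 1.\<close>

definition gmul :: "real^6 \<Rightarrow> real^6 \<Rightarrow> real^6" where
  "gmul g h = (\<chi> i.
     if i = 0 then g$0 + h$0
     else if i = 1 then g$1 + h$1
     else if i = 2 then h$2 * exp (g$0) + g$1 * h$4 * exp (g$0) + g$2
     else if i = 3 then h$3 * exp (- g$0) + g$1 * h$5 * exp (- g$0) + g$3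
     else if i = 4 then h$4 * exp (g$0) + g$4
     else h$5 * exp (- g$0) + g$5)"

definition Gamma :: "real \<Rightarrow> real^2^2 \<Rightarrow> (real^6) set" where
  "Gamma a0 P = {g. (\<exists>k::int. g$0 = a0 * of_int k) \<and> (\<exists>n::int. g$1 = of_int n) \<and>
      (\<exists>m1 m2::int. g$2 = of_int m1 * P$0$0 + of_int m2 * P$0$1 \<and>
                    g$3 = of_int m1 * P$1$0 + of_int m2 * P$1$1) \<and>
      (\<exists>n1 n2::int. g$4 = of_int n1 * P$0$0 + of_int n2 * P$0$1 \<and>
                    g$5 = of_int n1 * P$1$0 + of_int n2 * P$1$1)}"

text \<open>Left-invariant coframe e^1..e^6 (here indexed e 1 .. e 6), evaluated at p on v.\<close>
definition coframe :: "nat \<Rightarrow> real^6 \<Rightarrow> real^6 \<Rightarrow> real" where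
  "coframe k p v =
     (if k = 1 then v$0
      else if k = 2 then v$1
      else if k = 3 then exp (- p$0) * v$2 - p$1 * exp (- p$0) * v$4
      else if k = 4 then exp (p$0) * v$3 - p$1 * exp (p$0) * v$5
      else if k = 5 then exp (- p$0) * v$4
      else if k = 6 then exp (p$0) * v$5
      else 0)"

definition Phi :: "nat \<Rightarrow> real^6 \<Rightarrow> real^6 \<Rightarrow> complex" where
  "Phi k p v = Complex (coframe (2*k - 1) p v) (coframe (2*k) p v)"

coinductive smooth_fun :: "(real^6 \<Rightarrow> real) \<Rightarrow> bool" where
  "(\<forall>p. f differentiable (at p)) \<Longrightarrow>
   (\<forall>u. smooth_fun (\<lambda>p. frechet_derivative f (at p) u)) \<Longrightarrow> smooth_fun f"

definition two_form :: "(real^6 \<Rightarrow> real^6 \<Rightarrow> real^6 \<Rightarrow> real) \<Rightarrow> bool" where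
  "two_form \<omega> \<longleftrightarrow> (\<forall>p. bilinear (\<omega> p) \<and> (\<forall>v. \<omega> p v v = 0)) \<and>
     (\<forall>v w. smooth_fun (\<lambda>p. \<omega> p v w))"

text \<open>Exterior derivative of a 2-form in the global coordinates of R^6 (evaluated on
  constant vector fields u v w, whose brackets vanish).\<close>
definition ext_d2 :: "(real^6 \<Rightarrow> real^6 \<Rightarrow> real^6 \<Rightarrow> real) \<Rightarrow> real^6 \<Rightarrow> real^6 \<Rightarrow> real^6 \<Rightarrow> real^6 \<Rightarrow> real" where
  "ext_d2 \<omega> p u v w =
      frechet_derivative (\<lambda>q. \<omega> q v w) (at p) u
    - frechet_derivative (\<lambda>q. \<omega> q u w) (at p) v
    + frechet_derivative (\<lambda>q. \<omega> q u v) (at p) w"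

definition closed_form :: "(real^6 \<Rightarrow> real^6 \<Rightarrow> real^6 \<Rightarrow> real) \<Rightarrow> bool" where
  "closed_form \<omega> \<longleftrightarrow> (\<forall>p u v w. ext_d2 \<omega> p u v w = 0)"

text \<open>Invariance under the left action of \<Gamma> (i.e. the form descends to X = \<Gamma>\G):
  L_\<gamma>^* \<omega> = \<omega> for all \<gamma> \<in> \<Gamma>.\<close>
definition left_invariant_under :: "(real^6) set \<Rightarrow> (real^6 \<Rightarrow> real^6 \<Rightarrow> real^6 \<Rightarrow> real) \<Rightarrow> bool" where
  "left_invariant_under S \<omega> \<longleftrightarrow> (\<forall>\<gamma>\<in>S. \<forall>p v w.
      \<omega> (gmul \<gamma> p) (frechet_derivative (gmul \<gamma>) (at p) v)
                     (frechet_derivative (gmul \<gamma>) (at p) w) = \<omega> p v w)"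

definition compatible_symplectic ::
  "(real^6) set \<Rightarrow> (real^6 \<Rightarrow> real^6 \<Rightarrow> real^6) \<Rightarrow> (real^6 \<Rightarrow> real^6 \<Rightarrow> real^6 \<Rightarrow> real) \<Rightarrow> bool" where
  "compatible_symplectic S J \<omega> \<longleftrightarrow>
     two_form \<omega> \<and> closed_form \<omega> \<and> left_invariant_under S \<omega> \<and>
     (\<forall>p v. (\<forall>w. \<omega> p v w = 0) \<longrightarrow> v = 0) \<and>
     (\<forall>p v w. \<omega> p (J p v) (J p w) = \<omega> p v w) \<and>
     (\<forall>p v. v \<noteq> 0 \<longrightarrow> \<omega> p v (J p v) > 0)"

end

theory Submission
  imports Defs
begin

(*
  Compatibility with J makes \<omega>(\<partial>y1, \<partial>y2) positive, because
  J \<partial>y1 is a positive multiple of \<partial>y2. Closedness of \<omega> expresses this coefficient as a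
  combination of derivatives of other coefficients, namely of \<omega>(\<partial>y2, Z), \<omega>(\<partial>x, Z) with
  Z = \<partial>z1 + x \<partial>y1, and of \<omega>(\<partial>x, \<partial>y2). Averaging over the torus of y-translations in
  \<Gamma> kills the y-derivatives, and since the x-translation of \<Gamma> preserves Z, a further average
  in x kills the x-derivative. What remains says that the \<partial>z1-derivative of the averaged
  coefficient \<omega>(\<partial>x, \<partial>y2) is everywhere negative. But that average is continuous and
  periodic under the z-translations of \<Gamma>, so it has a maximum on each z-plane, where the
  derivative vanishes.
*)

section \<open>Averages over segments and tori\<close>

definition seg_avg :: "'a::real_normed_vector \<Rightarrow> ('a \<Rightarrow> real) \<Rightarrow> 'a \<Rightarrow> real" where
  "seg_avg a h p = integral {0..1} (\<lambda>s. h (p + s *\<^sub>R a))"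

definition has_cont_dir_deriv :: "('a::real_normed_vector \<Rightarrow> real) \<Rightarrow> 'a \<Rightarrow> ('a \<Rightarrow> real) \<Rightarrow> bool" where
  "has_cont_dir_deriv h v h' \<longleftrightarrow> continuous_on UNIV h \<and> continuous_on UNIV h' \<and>
     (\<forall>p t. ((\<lambda>s. h (p + s *\<^sub>R v)) has_real_derivative h' (p + t *\<^sub>R v)) (at t))"

lemma continuous_on_line:
  fixes h :: "'a::real_normed_vector \<Rightarrow> real"
  assumes "continuous_on UNIV h"
  shows "continuous_on A (\<lambda>s. h (p + s *\<^sub>R a))"
  by (rule continuous_on_compose2[OF assms]) (auto intro!: continuous_intros)

lemma integrable_on_line:
  fixes h :: "'a::real_normed_vector \<Rightarrow> real"
  assumes "continuous_on UNIV h"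
  shows "(\<lambda>s. h (p + s *\<^sub>R a)) integrable_on {0..1}"
  by (rule integrable_continuous_interval[OF continuous_on_line[OF assms]])

lemma continuous_on_seg_avg:
  fixes h :: "'a::real_normed_vector \<Rightarrow> real"
  assumes "continuous_on UNIV h"
  shows "continuous_on UNIV (seg_avg a h)"
proof -
  have "continuous_on (UNIV \<times> cbox 0 1) (\<lambda>(p, s::real). h (p + s *\<^sub>R a))"
    unfolding split_beta by (rule continuous_on_compose2[OF assms]) (auto intro!: continuous_intros)
  from integral_continuous_on_param[OF this] show ?thesis
    unfolding seg_avg_def cbox_interval by simp
qed

lemma has_cont_dir_deriv_seg_avg:
  assumes "has_cont_dir_deriv h v h'"
  shows "has_cont_dir_deriv (seg_avg a h) v (seg_avg a h')"
proof -
  have h: "continuous_on UNIV h" and h': "continuous_on UNIV h'"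
    and d: "\<And>p t. ((\<lambda>s. h (p + s *\<^sub>R v)) has_real_derivative h' (p + t *\<^sub>R v)) (at t)"
    using assms unfolding has_cont_dir_deriv_def by auto
  have "((\<lambda>x. seg_avg a h (p + x *\<^sub>R v)) has_real_derivative seg_avg a h' (p + t *\<^sub>R v)) (at t)" for p t
  proof -
    have "((\<lambda>x. integral (cbox 0 1) (\<lambda>s. h (p + x *\<^sub>R v + s *\<^sub>R a))) has_field_derivative
           integral (cbox 0 1) (\<lambda>s. h' (p + t *\<^sub>R v + s *\<^sub>R a))) (at t within UNIV)"
    proof (rule leibniz_rule_field_derivative[where fx="\<lambda>x s. h' (p + x *\<^sub>R v + s *\<^sub>R a)"])
      fix x s :: real
      show "((\<lambda>x. h (p + x *\<^sub>R v + s *\<^sub>R a)) has_field_derivative h' (p + x *\<^sub>R v + s *\<^sub>R a)) (at x within UNIV)"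
        using d[of "p + s *\<^sub>R a" x] by (simp add: add_ac)
    next
      show "(\<lambda>s. h (p + x *\<^sub>R v + s *\<^sub>R a)) integrable_on cbox 0 1" for x
        unfolding cbox_interval by (rule integrable_on_line[OF h])
      show "continuous_on (UNIV \<times> cbox 0 1) (\<lambda>(x, s). h' (p + x *\<^sub>R v + s *\<^sub>R a))"
        unfolding split_beta by (rule continuous_on_compose2[OF h']) (auto intro!: continuous_intros)
    qed auto
    then show ?thesis unfolding seg_avg_def cbox_interval by (simp add: add_ac)
  qed
  then show ?thesis
    unfolding has_cont_dir_deriv_def using continuous_on_seg_avg[OF h] continuous_on_seg_avg[OF h'] by auto
qed

lemma seg_avg_dir_deriv_periodic:
  assumes "has_cont_dir_deriv h a h'" and "\<And>q. h (q + a) = h q"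
  shows "seg_avg a h' p = 0"
proof -
  have d: "\<And>t. ((\<lambda>s. h (p + s *\<^sub>R a)) has_real_derivative h' (p + t *\<^sub>R a)) (at t)"
    using assms(1) unfolding has_cont_dir_deriv_def by auto
  have "((\<lambda>s. h' (p + s *\<^sub>R a)) has_integral (h (p + 1 *\<^sub>R a) - h (p + 0 *\<^sub>R a))) {0..1}"
    by (rule fundamental_theorem_of_calculus)
      (auto simp: has_real_derivative_iff_has_vector_derivative[symmetric] intro!: has_field_derivative_at_within d)
  then show ?thesis unfolding seg_avg_def using assms(2)[of p] by (simp add: integral_unique)
qed

lemma has_cont_dir_deriv_zero_const:
  assumes "has_cont_dir_deriv h v h'" and "\<And>q. h' q = 0"
  shows "h (p + c *\<^sub>R v) = h p"
proof -
  have "\<forall>t. ((\<lambda>s. h (p + s *\<^sub>R v)) has_real_derivative 0) (at t)"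
    using assms unfolding has_cont_dir_deriv_def by metis
  from DERIV_isconst_all[OF this, of c 0] show ?thesis by simp
qed

lemma seg_avg_pos:
  fixes h :: "'a::real_normed_vector \<Rightarrow> real"
  assumes "continuous_on UNIV h" and "\<And>q. h q > 0"
  shows "seg_avg a h p > 0"
proof -
  have c: "continuous_on {0..1} (\<lambda>s. h (p + s *\<^sub>R a))" by (rule continuous_on_line[OF assms(1)])
  have "\<exists>s0\<in>{0..1}. \<forall>s\<in>{0..1}. h (p + s0 *\<^sub>R a) \<le> h (p + s *\<^sub>R a)"
    by (rule continuous_attains_inf[OF compact_Icc _ c]) simp
  then obtain s0 where "\<forall>s\<in>{0..1}. h (p + s0 *\<^sub>R a) \<le> h (p + s *\<^sub>R a)" by blast
  then have "integral {0..1} (\<lambda>s::real. h (p + s0 *\<^sub>R a)) \<le> seg_avg a h p"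
    unfolding seg_avg_def by (intro integral_le) (auto intro: integrable_continuous_interval c simp del: atLeastAtMost_iff)
  then show ?thesis using assms(2)[of "p + s0 *\<^sub>R a"] by simp
qed

lemma seg_avg_add:
  fixes f g :: "'a::real_normed_vector \<Rightarrow> real"
  assumes "continuous_on UNIV f" and "continuous_on UNIV g"
  shows "seg_avg a (\<lambda>q. f q + g q) p = seg_avg a f p + seg_avg a g p"
  unfolding seg_avg_def using integrable_on_line assms by (intro integral_add) auto

lemma seg_avg_minus: "seg_avg a (\<lambda>q. - f q) p = - seg_avg a f p"
  unfolding seg_avg_def by simp

lemma seg_avg_mult_invariant:
  assumes "\<And>q s. c (q + s *\<^sub>R a) = c q"
  shows "seg_avg a (\<lambda>q. c q * f q) p = c p * seg_avg a f p"
  unfolding seg_avg_def assms by simp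

lemma seg_avg_translate:
  assumes "\<And>q. h (q + b) = h q"
  shows "seg_avg a h (p + b) = seg_avg a h p"
proof -
  have "(\<lambda>s. h (p + b + s *\<^sub>R a)) = (\<lambda>s. h (p + s *\<^sub>R a))"
    using assms by (metis add.commute add.left_commute)
  then show ?thesis unfolding seg_avg_def by simp
qed

definition torus_avg :: "'a::real_normed_vector \<Rightarrow> 'a \<Rightarrow> ('a \<Rightarrow> real) \<Rightarrow> 'a \<Rightarrow> real" where
  "torus_avg a b h = seg_avg a (seg_avg b h)"

lemma torus_avg_integral:
  "torus_avg a b h p = integral {0..1} (\<lambda>s. integral {0..1} (\<lambda>r. h (p + s *\<^sub>R a + r *\<^sub>R b)))"
  by (simp add: torus_avg_def seg_avg_def)

lemma continuous_on_torus_avg: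
  fixes h :: "'a::real_normed_vector \<Rightarrow> real"
  shows "continuous_on UNIV h \<Longrightarrow> continuous_on UNIV (torus_avg a b h)"
  unfolding torus_avg_def by (intro continuous_on_seg_avg)

lemma has_cont_dir_deriv_torus_avg:
  "has_cont_dir_deriv h v h' \<Longrightarrow> has_cont_dir_deriv (torus_avg a b h) v (torus_avg a b h')"
  unfolding torus_avg_def by (intro has_cont_dir_deriv_seg_avg)

lemma torus_avg_pos:
  fixes h :: "'a::real_normed_vector \<Rightarrow> real"
  assumes "continuous_on UNIV h" and "\<And>q. h q > 0"
  shows "torus_avg a b h p > 0"
  unfolding torus_avg_def
  by (intro seg_avg_pos continuous_on_seg_avg assms)

lemma torus_avg_add:
  fixes f g :: "'a::real_normed_vector \<Rightarrow> real"
  assumes "continuous_on UNIV f" and "continuous_on UNIV g"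
  shows "torus_avg a b (\<lambda>q. f q + g q) p = torus_avg a b f p + torus_avg a b g p"
proof -
  have "seg_avg b (\<lambda>q. f q + g q) = (\<lambda>q. seg_avg b f q + seg_avg b g q)"
    using seg_avg_add[OF assms] by blast
  then show ?thesis
    unfolding torus_avg_def using assms by (simp add: seg_avg_add continuous_on_seg_avg)
qed

lemma torus_avg_minus: "torus_avg a b (\<lambda>q. - f q) p = - torus_avg a b f p"
proof -
  have "seg_avg b (\<lambda>q. - f q) = (\<lambda>q. - seg_avg b f q)"
    using seg_avg_minus by blast
  then show ?thesis unfolding torus_avg_def by (simp add: seg_avg_minus)
qed

lemma torus_avg_mult_invariant:
  assumes "\<And>q s. c (q + s *\<^sub>R a) = c q" and "\<And>q s. c (q + s *\<^sub>R b) = c q"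
  shows "torus_avg a b (\<lambda>q. c q * f q) p = c p * torus_avg a b f p"
proof -
  have "seg_avg b (\<lambda>q. c q * f q) = (\<lambda>q. c q * seg_avg b f q)"
    using seg_avg_mult_invariant[OF assms(2)] by blast
  then show ?thesis unfolding torus_avg_def by (simp add: seg_avg_mult_invariant[OF assms(1)])
qed

lemma torus_avg_translate:
  "(\<And>q. h (q + c) = h q) \<Longrightarrow> torus_avg a b h (p + c) = torus_avg a b h p"
  unfolding torus_avg_def by (intro seg_avg_translate)

lemma torus_avg_dir_deriv_periodic:
  assumes ga: "has_cont_dir_deriv g a ga" and gb: "has_cont_dir_deriv g b gb"
    and per_a: "\<And>q. g (q + a) = g q" and per_b: "\<And>q. g (q + b) = g q"
  shows "torus_avg a b ga p = 0" and "torus_avg a b gb p = 0"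
proof -
  have "has_cont_dir_deriv (seg_avg b g) a (seg_avg b ga)"
    by (rule has_cont_dir_deriv_seg_avg[OF ga])
  moreover have "\<And>q. seg_avg b g (q + a) = seg_avg b g q"
    by (rule seg_avg_translate[where h=g, OF per_a])
  ultimately show "torus_avg a b ga p = 0"
    unfolding torus_avg_def by (rule seg_avg_dir_deriv_periodic)
  have "seg_avg b gb = (\<lambda>q. 0)"
    using seg_avg_dir_deriv_periodic[OF gb per_b] by blast
  then show "torus_avg a b gb p = 0"
    unfolding torus_avg_def by (simp add: seg_avg_def)
qed

lemma torus_avg_translate_span:
  assumes "has_cont_dir_deriv g a ga" and "has_cont_dir_deriv g b gb"
    and "\<And>q. g (q + a) = g q" and "\<And>q. g (q + b) = g q"
  shows "torus_avg a b g (p + s *\<^sub>R a + t *\<^sub>R b) = torus_avg a b g p"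
proof -
  have "\<And>q. torus_avg a b ga q = 0" "\<And>q. torus_avg a b gb q = 0"
    using torus_avg_dir_deriv_periodic[OF assms] by blast+
  then have "torus_avg a b g ((p + s *\<^sub>R a) + t *\<^sub>R b) = torus_avg a b g (p + s *\<^sub>R a)"
    and "torus_avg a b g (p + s *\<^sub>R a) = torus_avg a b g p"
    using has_cont_dir_deriv_zero_const has_cont_dir_deriv_torus_avg assms(1,2) by blast+
  then show ?thesis by simp
qed

section \<open>Continuously differentiable functions\<close>

definition C1_fun :: "('a::real_normed_vector \<Rightarrow> real) \<Rightarrow> bool" where
  "C1_fun f \<longleftrightarrow> (\<forall>p. f differentiable (at p)) \<and>
     (\<forall>v. continuous_on UNIV (\<lambda>p. frechet_derivative f (at p) v))"

definition dir_deriv :: "('a::real_normed_vector \<Rightarrow> real) \<Rightarrow> 'a \<Rightarrow> 'a \<Rightarrow> real" where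
  "dir_deriv f v p = frechet_derivative f (at p) v"

lemma C1_fun_imp_continuous_on: "C1_fun f \<Longrightarrow> continuous_on UNIV f"
  unfolding C1_fun_def
  by (intro differentiable_imp_continuous_on) (simp add: differentiable_on_def differentiable_at_withinI)

lemma continuous_on_dir_deriv: "C1_fun f \<Longrightarrow> continuous_on UNIV (dir_deriv f v)"
  unfolding C1_fun_def dir_deriv_def by auto

lemma has_dir_deriv_line:
  assumes "f differentiable (at (p + t *\<^sub>R v))"
  shows "((\<lambda>s. f (p + s *\<^sub>R v)) has_real_derivative dir_deriv f v (p + t *\<^sub>R v)) (at t)"
proof -
  let ?q = "p + t *\<^sub>R v"
  have F: "(f has_derivative frechet_derivative f (at ?q)) (at ?q)"
    using assms frechet_derivative_works by blast
  have "((\<lambda>s. p + s *\<^sub>R v) has_derivative (\<lambda>s. s *\<^sub>R v)) (at t)"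
    by (auto intro!: derivative_eq_intros)
  from has_derivative_compose[OF this F]
  have "((\<lambda>s. f (p + s *\<^sub>R v)) has_derivative (\<lambda>s. frechet_derivative f (at ?q) (s *\<^sub>R v))) (at t)" .
  moreover have "(\<lambda>s. frechet_derivative f (at ?q) (s *\<^sub>R v)) = (*) (dir_deriv f v ?q)"
    using has_derivative_bounded_linear[OF F] by (auto simp: dir_deriv_def linear_simps)
  ultimately show ?thesis unfolding has_field_derivative_def by simp
qed

lemma has_cont_dir_deriv_dir_deriv:
  assumes "C1_fun f"
  shows "has_cont_dir_deriv f v (dir_deriv f v)"
  unfolding has_cont_dir_deriv_def
proof (intro conjI allI)
  show "continuous_on UNIV f" "continuous_on UNIV (dir_deriv f v)"
    using assms by (rule C1_fun_imp_continuous_on, rule continuous_on_dir_deriv)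
  show "((\<lambda>s. f (p + s *\<^sub>R v)) has_real_derivative dir_deriv f v (p + t *\<^sub>R v)) (at t)" for p t
    using assms unfolding C1_fun_def by (intro has_dir_deriv_line) blast
qed

lemma dir_deriv_lincomb:
  assumes "f differentiable (at p)"
  shows "dir_deriv f (\<alpha> *\<^sub>R x + \<beta> *\<^sub>R y) p = \<alpha> * dir_deriv f x p + \<beta> * dir_deriv f y p"
proof -
  have "(f has_derivative frechet_derivative f (at p)) (at p)"
    using assms frechet_derivative_works by blast
  then have "bounded_linear (frechet_derivative f (at p))"
    by (rule has_derivative_bounded_linear)
  then show ?thesis
    unfolding dir_deriv_def by (simp add: linear_simps)
qed

lemma dir_deriv_minus:
  assumes "f differentiable (at p)"
  shows "dir_deriv (\<lambda>q. - f q) v p = - dir_deriv f v p"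
proof -
  have "(f has_derivative frechet_derivative f (at p)) (at p)"
    using assms frechet_derivative_works by blast
  then have "((\<lambda>q. - f q) has_derivative (\<lambda>v. - frechet_derivative f (at p) v)) (at p)"
    by (rule has_derivative_minus)
  from fun_cong[OF frechet_derivative_at[OF this]] show ?thesis
    unfolding dir_deriv_def by simp
qed

lemma
  fixes f g :: "'a::real_normed_vector \<Rightarrow> real"
  assumes f: "C1_fun f" and g: "C1_fun g" and l: "bounded_linear l"
  shows C1_fun_add_linear_mult: "C1_fun (\<lambda>q. f q + l q * g q)"
    and dir_deriv_add_linear_mult:
      "dir_deriv (\<lambda>q. f q + l q * g q) v p = dir_deriv f v p + (l p * dir_deriv g v p + l v * g p)"
proof -
  have D: "((\<lambda>q. f q + l q * g q) has_derivative
     (\<lambda>v. dir_deriv f v p + (l p * dir_deriv g v p + l v * g p))) (at p)" for p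
  proof -
    have "(f has_derivative frechet_derivative f (at p)) (at p)"
      "(g has_derivative frechet_derivative g (at p)) (at p)"
      using f g frechet_derivative_works unfolding C1_fun_def by blast+
    then show ?thesis
      unfolding dir_deriv_def
      by (intro has_derivative_add has_derivative_mult bounded_linear_imp_has_derivative l)
  qed
  then have E: "dir_deriv (\<lambda>q. f q + l q * g q) v p = dir_deriv f v p + (l p * dir_deriv g v p + l v * g p)"
    for p v using frechet_derivative_at[OF D] unfolding dir_deriv_def by metis
  then show "dir_deriv (\<lambda>q. f q + l q * g q) v p = dir_deriv f v p + (l p * dir_deriv g v p + l v * g p)" .
  have cont: "continuous_on UNIV (\<lambda>p. dir_deriv f v p + (l p * dir_deriv g v p + l v * g p))" for v
    using f g l by (intro continuous_intros continuous_on_dir_deriv C1_fun_imp_continuous_on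
        linear_continuous_on)
  show "C1_fun (\<lambda>q. f q + l q * g q)"
    unfolding C1_fun_def
  proof (intro conjI allI)
    show "(\<lambda>q. f q + l q * g q) differentiable (at p)" for p
      using D unfolding differentiable_def by blast
    show "continuous_on UNIV (\<lambda>p. frechet_derivative (\<lambda>q. f q + l q * g q) (at p) v)" for v
      using cont[of v] E unfolding dir_deriv_def by simp
  qed
qed

lemma torus_avg_dir_deriv_span:
  assumes g: "C1_fun g" and "\<And>q. g (q + a) = g q" and "\<And>q. g (q + b) = g q"
  shows "torus_avg a b (dir_deriv g (\<alpha> *\<^sub>R a + \<beta> *\<^sub>R b)) p = 0"
proof -
  have "dir_deriv g (\<alpha> *\<^sub>R a + \<beta> *\<^sub>R b) = (\<lambda>q. \<alpha> * dir_deriv g a q + \<beta> * dir_deriv g b q)"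
    using g dir_deriv_lincomb unfolding C1_fun_def by blast
  moreover have "torus_avg a b (dir_deriv g a) p = 0" "torus_avg a b (dir_deriv g b) p = 0"
    using torus_avg_dir_deriv_periodic has_cont_dir_deriv_dir_deriv[OF g] assms(2,3) by blast+
  ultimately show ?thesis
    using g by (simp add: torus_avg_add torus_avg_mult_invariant continuous_on_dir_deriv
        continuous_on_mult_left)
qed

lemma smooth_fun_imp_C1_fun:
  assumes "smooth_fun f"
  shows "C1_fun f"
proof -
  have cont: "continuous_on UNIV g" if "smooth_fun g" for g :: "real^6 \<Rightarrow> real"
    using that by (auto elim!: smooth_fun.cases intro!: differentiable_imp_continuous_on
        simp: differentiable_on_def differentiable_at_withinI)
  from assms show ?thesis
    unfolding C1_fun_def by (auto elim!: smooth_fun.cases intro: cont)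
qed

section \<open>Critical points of doubly periodic functions\<close>

lemma doubly_periodic_critical_point:
  fixes Q Q' :: "'a::real_normed_vector \<Rightarrow> real"
  assumes Q: "has_cont_dir_deriv Q (\<kappa>1 *\<^sub>R b1 + \<kappa>2 *\<^sub>R b2) Q'"
    and per: "\<And>q k1 k2. Q (q + (of_int k1 *\<^sub>R b1 + of_int k2 *\<^sub>R b2)) = Q q"
  obtains p where "Q' p = 0"
proof -
  define v where "v = \<kappa>1 *\<^sub>R b1 + \<kappa>2 *\<^sub>R b2"
  define F where "F z = Q (fst z *\<^sub>R b1 + snd z *\<^sub>R b2)" for z :: "real \<times> real"
  have "continuous_on UNIV Q" using Q unfolding has_cont_dir_deriv_def by simp
  then have F: "continuous_on (cbox (0, 0) (1, 1)) F"
    unfolding F_def by (rule continuous_on_compose2) (auto intro!: continuous_intros)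
  have "cbox (0::real, 0::real) (1, 1) \<noteq> {}" by (simp add: cbox_interval)
  from continuous_attains_sup[OF compact_cbox this F]
  obtain z0 where z0: "\<And>z. z \<in> cbox (0, 0) (1, 1) \<Longrightarrow> F z \<le> F z0"
    by blast
  have global_max: "Q (s *\<^sub>R b1 + r *\<^sub>R b2) \<le> F z0" for s r
  proof -
    define s' where "s' = s - of_int \<lfloor>s\<rfloor>"
    define r' where "r' = r - of_int \<lfloor>r\<rfloor>"
    have "0 \<le> s'" "s' \<le> 1" "0 \<le> r'" "r' \<le> 1"
      unfolding s'_def r'_def
      using of_int_floor_le[of s] real_of_int_floor_add_one_gt[of s]
        of_int_floor_le[of r] real_of_int_floor_add_one_gt[of r] by linarith+
    then have "(s', r') \<in> cbox (0, 0) (1, 1)" by (simp add: cbox_interval)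
    moreover have "s *\<^sub>R b1 + r *\<^sub>R b2 = (s' *\<^sub>R b1 + r' *\<^sub>R b2) + (of_int \<lfloor>s\<rfloor> *\<^sub>R b1 + of_int \<lfloor>r\<rfloor> *\<^sub>R b2)"
      unfolding s'_def r'_def by (simp add: algebra_simps)
    ultimately have "Q (s *\<^sub>R b1 + r *\<^sub>R b2) = F (s', r')"
      unfolding F_def using per by simp
    with z0 \<open>(s', r') \<in> cbox (0, 0) (1, 1)\<close> show ?thesis by simp
  qed
  define q0 where "q0 = fst z0 *\<^sub>R b1 + snd z0 *\<^sub>R b2"
  have "Q (q0 + y *\<^sub>R v) \<le> Q (q0 + 0 *\<^sub>R v)" for y
  proof -
    have "q0 + y *\<^sub>R v = (fst z0 + y * \<kappa>1) *\<^sub>R b1 + (snd z0 + y * \<kappa>2) *\<^sub>R b2"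
      unfolding q0_def v_def by (simp add: algebra_simps)
    then show ?thesis using global_max unfolding F_def q0_def by simp
  qed
  moreover have "((\<lambda>y. Q (q0 + y *\<^sub>R v)) has_real_derivative Q' (q0 + 0 *\<^sub>R v)) (at 0)"
    using Q unfolding has_cont_dir_deriv_def v_def by blast
  ultimately have "Q' (q0 + 0 *\<^sub>R v) = 0"
    by (intro DERIV_local_max[OF _ zero_less_one]) auto
  then show thesis by (rule that)
qed

section \<open>Coordinates on G and translations in \<Gamma>\<close>

definition vec6 :: "real \<Rightarrow> real \<Rightarrow> real \<Rightarrow> real \<Rightarrow> real \<Rightarrow> real \<Rightarrow> real^6" where
  "vec6 t x y1 y2 z1 z2 = (\<chi> i. if i = 0 then t else if i = 1 then x else if i = 2 then y1
      else if i = 3 then y2 else if i = 4 then z1 else z2)"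

lemma vec6_nth [simp]:
  "vec6 t x y1 y2 z1 z2 $ 0 = t" "vec6 t x y1 y2 z1 z2 $ 1 = x"
  "vec6 t x y1 y2 z1 z2 $ 2 = y1" "vec6 t x y1 y2 z1 z2 $ 3 = y2"
  "vec6 t x y1 y2 z1 z2 $ 4 = z1" "vec6 t x y1 y2 z1 z2 $ 5 = z2"
  by (simp_all add: vec6_def)

lemma exhaust_6:
  fixes i :: 6
  shows "i = 0 \<or> i = 1 \<or> i = 2 \<or> i = 3 \<or> i = 4 \<or> i = 5"
proof (induct i)
  case (of_int z)
  then have "z = 0 \<or> z = 1 \<or> z = 2 \<or> z = 3 \<or> z = 4 \<or> z = 5" by auto
  then show ?case by auto
qed

lemma vec6_eqI:
  fixes x y :: "real^6"
  assumes "x$0 = y$0" "x$1 = y$1" "x$2 = y$2" "x$3 = y$3" "x$4 = y$4" "x$5 = y$5"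
  shows "x = y"
  unfolding vec_eq_iff
proof
  fix i :: 6
  show "x$i = y$i" using exhaust_6[of i] assms by auto
qed

definition yvec :: "real^2 \<Rightarrow> real^6" where "yvec u = vec6 0 0 (u$0) (u$1) 0 0"
definition zvec :: "real^2 \<Rightarrow> real^6" where "zvec u = vec6 0 0 0 0 (u$0) (u$1)"
definition shear :: "real^6 \<Rightarrow> real^6" where "shear q = vec6 0 0 (q$4) (q$5) 0 0"

definition "ex = vec6 0 1 0 0 0 0"
definition "ey1 = vec6 0 0 1 0 0 0"
definition "ey2 = vec6 0 0 0 1 0 0"
definition "ez1 = vec6 0 0 0 0 1 0"

lemmas vec6_defs = yvec_def zvec_def shear_def ex_def ey1_def ey2_def ez1_def

lemma shear_basis [simp]: "shear ex = 0" "shear ey1 = 0" "shear ey2 = 0" "shear ez1 = ey1"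
  by (rule vec6_eqI; simp add: vec6_defs)+

lemma yvec_zvec_nth [simp]:
  "yvec u $ 0 = 0" "yvec u $ 1 = 0" "yvec u $ 4 = 0" "yvec u $ 5 = 0"
  "zvec u $ 0 = 0" "zvec u $ 1 = 0"
  by (simp_all add: yvec_def zvec_def)

lemma gmul_eq_shear:
  assumes "\<gamma>$0 = 0"
  shows "gmul \<gamma> p = \<gamma> + p + \<gamma>$1 *\<^sub>R shear p"
  by (rule vec6_eqI) (simp_all add: gmul_def shear_def assms)

lemma frechet_derivative_gmul:
  assumes "\<gamma>$0 = 0"
  shows "frechet_derivative (gmul \<gamma>) (at p) v = v + \<gamma>$1 *\<^sub>R shear v"
proof -
  have "linear shear"
    by (rule linearI; rule vec6_eqI) (simp_all add: shear_def)
  then have "((\<lambda>q. \<gamma> + (q + \<gamma>$1 *\<^sub>R shear q)) has_derivative (\<lambda>v. v + \<gamma>$1 *\<^sub>R shear v)) (at p)"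
    by (auto intro!: derivative_eq_intros linear_imp_has_derivative)
  moreover have "gmul \<gamma> = (\<lambda>q. \<gamma> + (q + \<gamma>$1 *\<^sub>R shear q))"
    using gmul_eq_shear[OF assms] by (auto simp: add.assoc)
  ultimately show ?thesis using frechet_derivative_at by (metis (no_types))
qed

lemma lattice_translation_in_Gamma:
  "of_int k *\<^sub>R yvec (column 0 P) + of_int l *\<^sub>R yvec (column 1 P)
     + (of_int m *\<^sub>R zvec (column 0 P) + of_int n *\<^sub>R zvec (column 1 P)) \<in> Gamma a0 P"
  (is "?g \<in> _")
proof -
  have "?g$0 = a0 * of_int 0" "?g$1 = of_int 0"
    "?g$2 = of_int k * P$0$0 + of_int l * P$0$1" "?g$3 = of_int k * P$1$0 + of_int l * P$1$1"
    "?g$4 = of_int m * P$0$0 + of_int n * P$0$1" "?g$5 = of_int m * P$1$0 + of_int n * P$1$1"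
    by (simp_all add: yvec_def zvec_def column_def)
  then show ?thesis unfolding Gamma_def by blast
qed

lemma ex_in_Gamma: "ex \<in> Gamma a0 P"
proof -
  have "ex$0 = a0 * of_int 0" "ex$1 = of_int 1"
    "ex$2 = of_int 0 * P$0$0 + of_int 0 * P$0$1" "ex$3 = of_int 0 * P$1$0 + of_int 0 * P$1$1"
    "ex$4 = of_int 0 * P$0$0 + of_int 0 * P$0$1" "ex$5 = of_int 0 * P$1$0 + of_int 0 * P$1$1"
    by (simp_all add: ex_def)
  then show ?thesis unfolding Gamma_def by blast
qed

lemma invertible_columns_span:
  fixes P :: "real^2^2"
  assumes "invertible P"
  obtains \<alpha> \<beta> where "u = \<alpha> *\<^sub>R column 0 P + \<beta> *\<^sub>R column 1 P"
proof -
  have two: "(2::2) = 0" by simp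
  have UNIV_2: "(UNIV::2 set) = {0, 1}"
    using exhaust_2 by (auto simp: two)
  have "surj ((*v) P)"
    using assms matrix_right_invertible_surjective unfolding invertible_def by blast
  then obtain w where "u = P *v w" by blast
  also have "\<dots> = w$0 *\<^sub>R column 0 P + w$1 *\<^sub>R column 1 P"
    by (simp add: matrix_mult_sum UNIV_2 scalar_mult_eq_scaleR)
  finally show thesis by (rule that)
qed

lemma plane_span:
  fixes P :: "real^2^2"
  assumes "invertible P"
  obtains \<alpha> \<beta> where "vec6 0 0 y1 y2 0 0 = \<alpha> *\<^sub>R yvec (column 0 P) + \<beta> *\<^sub>R yvec (column 1 P)"
    and "vec6 0 0 0 0 y1 y2 = \<alpha> *\<^sub>R zvec (column 0 P) + \<beta> *\<^sub>R zvec (column 1 P)"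
proof -
  obtain \<alpha> \<beta> where "(\<chi> i. if i = 0 then y1 else y2) = \<alpha> *\<^sub>R column 0 P + \<beta> *\<^sub>R column 1 P"
    using invertible_columns_span[OF assms] by blast
  from arg_cong[OF this, of "\<lambda>u. u$0"] arg_cong[OF this, of "\<lambda>u. u$1"]
  have y12: "y1 = \<alpha> * P$0$0 + \<beta> * P$0$1" "y2 = \<alpha> * P$1$0 + \<beta> * P$1$1"
    by (simp_all add: column_def)
  show thesis
    by (rule that[of \<alpha> \<beta>]; rule vec6_eqI) (simp_all add: yvec_def zvec_def column_def y12)
qed

lemma alternating_bilinear_antisym:
  assumes "bilinear B" and "\<And>v. B v v = 0"
  shows "B u w = - B w u"
proof -
  have "B (u + w) (u + w) = B u u + B u w + B w u + B w w"
    using assms(1) by (simp add: bilinear_ladd bilinear_radd)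
  then show ?thesis using assms(2) by (metis add.commute add.right_neutral add_eq_0_iff)
qed

locale compatible_form =
  fixes \<omega> :: "real^6 \<Rightarrow> real^6 \<Rightarrow> real^6 \<Rightarrow> real" and a0 :: real and P :: "real^2^2"
    and J :: "real^6 \<Rightarrow> real^6 \<Rightarrow> real^6"
  assumes symplectic: "compatible_symplectic (Gamma a0 P) J \<omega>"
    and J_Phi: "\<forall>p v k. k \<in> {1,2,3} \<longrightarrow> Phi k p (J p v) = \<i> * Phi k p v"
    and P_invertible: "invertible P"
begin

lemma bilinear: "bilinear (\<omega> p)"
  and alternating: "\<omega> p v v = 0"
  and smooth: "smooth_fun (\<lambda>p. \<omega> p v w)"
  and closed: "ext_d2 \<omega> p u v w = 0"
  and positive: "v \<noteq> 0 \<Longrightarrow> \<omega> p v (J p v) > 0"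
  using symplectic unfolding compatible_symplectic_def two_form_def closed_form_def by auto

lemma antisym: "\<omega> p v w = - \<omega> p w v"
  using alternating_bilinear_antisym[OF bilinear alternating] .

lemma invariant_shear:
  assumes "\<gamma> \<in> Gamma a0 P" and "\<gamma>$0 = 0"
  shows "\<omega> (\<gamma> + p + \<gamma>$1 *\<^sub>R shear p) (v + \<gamma>$1 *\<^sub>R shear v) (w + \<gamma>$1 *\<^sub>R shear w) = \<omega> p v w"
proof -
  have "\<omega> (gmul \<gamma> p) (frechet_derivative (gmul \<gamma>) (at p) v) (frechet_derivative (gmul \<gamma>) (at p) w)
      = \<omega> p v w"
    using symplectic assms(1) unfolding compatible_symplectic_def left_invariant_under_def by blast
  then show ?thesis by (simp add: gmul_eq_shear[OF assms(2)] frechet_derivative_gmul[OF assms(2)])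
qed

lemma invariant_translation:
  assumes "\<gamma> \<in> Gamma a0 P" and "\<gamma>$0 = 0" and "\<gamma>$1 = 0"
  shows "\<omega> (p + \<gamma>) v w = \<omega> p v w"
  using invariant_shear[OF assms(1,2), of p v w] assms(3) by (simp add: add.commute)

text \<open>The coefficients w1 and w2 are \<omega>(\<partial>y2, Z) and \<omega>(\<partial>x, Z) for the vector field
  Z = \<partial>z1 + x \<partial>y1, which is invariant under the x-translation in \<Gamma>.\<close>

definition w0 :: "real^6 \<Rightarrow> real" where "w0 q = \<omega> q ey1 ey2"
definition w1 :: "real^6 \<Rightarrow> real" where "w1 q = \<omega> q ey2 ez1 + q$1 * \<omega> q ey2 ey1"
definition w2 :: "real^6 \<Rightarrow> real" where "w2 q = \<omega> q ex ez1 + q$1 * \<omega> q ex ey1"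
definition w3 :: "real^6 \<Rightarrow> real" where "w3 q = \<omega> q ex ey2"

lemma J_ey1: "J p ey1 = exp (- 2 * p$0) *\<^sub>R ey2"
proof -
  define u where "u = J p ey1"
  have "Phi k p u = \<i> * Phi k p ey1" if "k \<in> {1,2,3}" for k
    using J_Phi that unfolding u_def by blast
  from this[of 1] this[of 2] this[of 3]
  have "u$0 = 0" "u$1 = 0" "u$2 = 0" "u$4 = 0" "u$5 = 0" and u3: "exp (p$0) * u$3 = exp (- p$0)"
    by (auto simp: Phi_def complex_eq_iff coframe_def ey1_def)
  moreover have "u$3 = exp (- 2 * p$0)"
  proof -
    have "exp (p$0) * u$3 = exp (p$0) * exp (- 2 * p$0)"
      unfolding u3 exp_add[symmetric] by simp
    then show ?thesis by simp
  qed
  ultimately show ?thesis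
    unfolding u_def[symmetric] by (intro vec6_eqI) (simp_all add: ey2_def)
qed

lemma w0_pos: "w0 p > 0"
proof -
  have "ey1 \<noteq> 0"
    by (metis ey1_def vec6_nth(3) zero_index zero_neq_one)
  then have "0 < \<omega> p ey1 (J p ey1)" by (rule positive)
  also have "\<dots> = exp (- 2 * p$0) * w0 p"
    unfolding J_ey1 w0_def by (simp add: bilinear_rmul[OF bilinear])
  finally show ?thesis by (simp add: zero_less_mult_iff)
qed

lemma C1_fun_w: "C1_fun w0" "C1_fun w1" "C1_fun w2" "C1_fun w3"
proof -
  have l: "bounded_linear (\<lambda>q::real^6. q$1)" by (rule bounded_linear_vec_nth)
  show "C1_fun w0" "C1_fun w3"
    unfolding w0_def w3_def by (simp_all add: smooth_fun_imp_C1_fun[OF smooth])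
  show "C1_fun w1" "C1_fun w2"
    unfolding w1_def w2_def
    by (rule C1_fun_add_linear_mult[OF smooth_fun_imp_C1_fun[OF smooth] smooth_fun_imp_C1_fun[OF smooth] l])+
qed

lemma closedness_identity:
  "w0 p = - dir_deriv w1 ex p + dir_deriv w2 ey2 p - dir_deriv w3 ez1 p - p$1 * dir_deriv w3 ey1 p"
proof -
  let ?W = "\<lambda>a b q. \<omega> q a b"
  have C: "C1_fun (?W a b)" for a b by (rule smooth_fun_imp_C1_fun[OF smooth])
  have l: "bounded_linear (\<lambda>q::real^6. q$1)" by (rule bounded_linear_vec_nth)
  have d1: "dir_deriv w1 ex p = dir_deriv (?W ey2 ez1) ex p + (p$1 * dir_deriv (?W ey2 ey1) ex p + \<omega> p ey2 ey1)"
    unfolding w1_def using dir_deriv_add_linear_mult[OF C C l] by (simp add: ex_def ey2_def)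
  have d2: "dir_deriv w2 ey2 p = dir_deriv (?W ex ez1) ey2 p + p$1 * dir_deriv (?W ex ey1) ey2 p"
    unfolding w2_def using dir_deriv_add_linear_mult[OF C C l] by (simp add: ey2_def)
  have "?W ey2 ey1 = (\<lambda>q. - \<omega> q ey1 ey2)" using antisym by blast
  then have d3: "dir_deriv (?W ey2 ey1) ex p = - dir_deriv (?W ey1 ey2) ex p"
    using dir_deriv_minus C unfolding C1_fun_def by metis
  have "ext_d2 \<omega> p ex ey2 ez1 = 0" and "ext_d2 \<omega> p ex ey1 ey2 = 0" by (rule closed)+
  then have c1: "dir_deriv (?W ey2 ez1) ex p - dir_deriv (?W ex ez1) ey2 p + dir_deriv (?W ex ey2) ez1 p = 0"
    and c2: "dir_deriv (?W ey1 ey2) ex p = dir_deriv (?W ex ey2) ey1 p - dir_deriv (?W ex ey1) ey2 p"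
    unfolding ext_d2_def dir_deriv_def by simp_all
  then show ?thesis
    unfolding d1 d2 d3 c2 w0_def w3_def using antisym[of p ey2 ey1]
    by (simp add: algebra_simps)
qed

lemma w_translation:
  assumes "\<gamma> \<in> Gamma a0 P" and "\<gamma>$0 = 0" and "\<gamma>$1 = 0"
  shows "w1 (p + \<gamma>) = w1 p" "w2 (p + \<gamma>) = w2 p" "w3 (p + \<gamma>) = w3 p"
  using invariant_translation[OF assms] assms(3) unfolding w1_def w2_def w3_def by simp_all

lemma w1_shear_shift: "w1 (ex + p + shear p) = w1 p"
proof -
  let ?x = "ex + p + shear p"
  have inv: "\<omega> ?x (v + shear v) (w + shear w) = \<omega> p v w" for v w
    using invariant_shear[OF ex_in_Gamma, of p v w] by (simp add: ex_def)
  have "\<omega> ?x ey2 (ez1 + ey1) = \<omega> p ey2 ez1" "\<omega> ?x ey2 ey1 = \<omega> p ey2 ey1"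
    using inv[of ey2 ez1] inv[of ey2 ey1] by (simp_all add: add.commute)
  moreover have "?x$1 = p$1 + 1" by (simp add: ex_def shear_def)
  ultimately show ?thesis
    unfolding w1_def by (simp add: bilinear_radd[OF bilinear] algebra_simps ex_def shear_def)
qed

abbreviation "ya \<equiv> yvec (column 0 P)"
abbreviation "yb \<equiv> yvec (column 1 P)"
abbreviation "za \<equiv> zvec (column 0 P)"
abbreviation "zb \<equiv> zvec (column 1 P)"

abbreviation yavg :: "(real^6 \<Rightarrow> real) \<Rightarrow> real^6 \<Rightarrow> real" where
  "yavg \<equiv> torus_avg ya yb"

lemma w_y_periodic:
  "w1 (q + ya) = w1 q" "w2 (q + ya) = w2 q" "w3 (q + ya) = w3 q"
  "w1 (q + yb) = w1 q" "w2 (q + yb) = w2 q" "w3 (q + yb) = w3 q"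
proof -
  have "ya \<in> Gamma a0 P" "yb \<in> Gamma a0 P"
    using lattice_translation_in_Gamma[where k=1 and l=0 and m=0 and n=0]
      lattice_translation_in_Gamma[where k=0 and l=1 and m=0 and n=0] by simp_all
  then show "w1 (q + ya) = w1 q" "w2 (q + ya) = w2 q" "w3 (q + ya) = w3 q"
    "w1 (q + yb) = w1 q" "w2 (q + yb) = w2 q" "w3 (q + yb) = w3 q"
    using w_translation by simp_all
qed

lemma yavg_dir_deriv_y_eq_0:
  assumes "C1_fun g" and "\<And>q. g (q + ya) = g q" and "\<And>q. g (q + yb) = g q"
  shows "yavg (dir_deriv g (vec6 0 0 y1 y2 0 0)) p = 0"
proof -
  obtain \<alpha> \<beta> where "vec6 0 0 y1 y2 0 0 = \<alpha> *\<^sub>R ya + \<beta> *\<^sub>R yb"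
    using plane_span[OF P_invertible] by blast
  then show ?thesis using torus_avg_dir_deriv_span[OF assms, of \<alpha> \<beta> p] by simp
qed

lemma yavg_w0:
  "yavg w0 p = - yavg (dir_deriv w1 ex) p - yavg (dir_deriv w3 ez1) p"
proof -
  let ?A = "\<lambda>q. - dir_deriv w1 ex q + - dir_deriv w3 ez1 q"
  let ?B = "\<lambda>q. dir_deriv w2 ey2 q + - (q$1 * dir_deriv w3 ey1 q)"
  note cont = continuous_on_dir_deriv[OF C1_fun_w(2)] continuous_on_dir_deriv[OF C1_fun_w(3)]
    continuous_on_dir_deriv[OF C1_fun_w(4)]
  have "w0 = (\<lambda>q. ?A q + ?B q)"
    using closedness_identity by (auto simp: algebra_simps)
  then have "yavg w0 p = yavg ?A p + yavg ?B p"
    by (simp only:) (rule torus_avg_add; intro continuous_intros cont)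
  also have "yavg ?A p = yavg (\<lambda>q. - dir_deriv w1 ex q) p + yavg (\<lambda>q. - dir_deriv w3 ez1 q) p"
    by (rule torus_avg_add; intro continuous_intros cont)
  also have "yavg ?B p = yavg (dir_deriv w2 ey2) p + yavg (\<lambda>q. - (q$1 * dir_deriv w3 ey1 q)) p"
    by (rule torus_avg_add; intro continuous_intros cont)
  also have "yavg (\<lambda>q. - (q$1 * dir_deriv w3 ey1 q)) p = - (p$1 * yavg (dir_deriv w3 ey1) p)"
    by (simp add: torus_avg_minus torus_avg_mult_invariant)
  also have "yavg (dir_deriv w2 ey2) p = 0"
    using yavg_dir_deriv_y_eq_0[OF C1_fun_w(3) w_y_periodic(2,5), of 0 1] by (simp add: ey2_def)
  also have "yavg (dir_deriv w3 ey1) p = 0"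
    using yavg_dir_deriv_y_eq_0[OF C1_fun_w(4) w_y_periodic(3,6), of 1 0] by (simp add: ey1_def)
  finally show ?thesis by (simp add: torus_avg_minus)
qed

lemma yavg_w1_x_periodic: "yavg w1 (p + ex) = yavg w1 p"
proof -
  obtain \<alpha> \<beta> where shear_p: "shear p = \<alpha> *\<^sub>R ya + \<beta> *\<^sub>R yb"
    using plane_span[OF P_invertible] unfolding shear_def by blast
  have "w1 (p + ex + s *\<^sub>R ya + r *\<^sub>R yb) = w1 (p - shear p + s *\<^sub>R ya + r *\<^sub>R yb)" for s r
  proof -
    let ?y = "p - shear p + s *\<^sub>R ya + r *\<^sub>R yb"
    have "p + ex + s *\<^sub>R ya + r *\<^sub>R yb = ex + ?y + shear ?y"
      by (rule vec6_eqI) (simp_all add: shear_def ex_def yvec_def)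
    then show ?thesis by (simp only: w1_shear_shift)
  qed
  then have "yavg w1 (p + ex) = yavg w1 (p - shear p)"
    unfolding torus_avg_integral by simp
  also have "\<dots> = yavg w1 (p - shear p + \<alpha> *\<^sub>R ya + \<beta> *\<^sub>R yb)"
    using has_cont_dir_deriv_dir_deriv[OF C1_fun_w(2)] w_y_periodic(1,4)
    by (intro torus_avg_translate_span[symmetric])
  finally show ?thesis by (simp add: shear_p)
qed

lemma x_avg_dir_deriv_w3_neg: "seg_avg ex (yavg (dir_deriv w3 ez1)) p < 0"
proof -
  note cont = continuous_on_torus_avg[OF continuous_on_dir_deriv[OF C1_fun_w(2)]]
    continuous_on_torus_avg[OF continuous_on_dir_deriv[OF C1_fun_w(4)]]
  have "has_cont_dir_deriv (yavg w1) ex (yavg (dir_deriv w1 ex))"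
    by (intro has_cont_dir_deriv_torus_avg has_cont_dir_deriv_dir_deriv C1_fun_w)
  then have x_periodic: "seg_avg ex (yavg (dir_deriv w1 ex)) p = 0"
    using yavg_w1_x_periodic by (rule seg_avg_dir_deriv_periodic)
  have "0 < seg_avg ex (yavg w0) p"
    using C1_fun_imp_continuous_on[OF C1_fun_w(1)] w0_pos
    by (intro seg_avg_pos torus_avg_pos continuous_on_torus_avg)
  also have "\<dots> = seg_avg ex (\<lambda>q. - yavg (dir_deriv w1 ex) q + - yavg (dir_deriv w3 ez1) q) p"
    by (rule arg_cong[where f="\<lambda>h. seg_avg ex h p"]) (simp add: fun_eq_iff yavg_w0)
  also have "\<dots> = - seg_avg ex (yavg (dir_deriv w1 ex)) p + - seg_avg ex (yavg (dir_deriv w3 ez1)) p"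
    using seg_avg_add[OF continuous_on_minus[OF cont(1)] continuous_on_minus[OF cont(2)]]
    by (simp add: seg_avg_minus)
  finally show ?thesis using x_periodic by simp
qed

lemma x_avg_w3_z_periodic:
  "seg_avg ex (yavg w3) (q + (of_int k *\<^sub>R za + of_int l *\<^sub>R zb)) = seg_avg ex (yavg w3) q"
proof -
  let ?\<gamma> = "of_int k *\<^sub>R za + of_int l *\<^sub>R zb"
  have "?\<gamma> \<in> Gamma a0 P"
    using lattice_translation_in_Gamma[where k=0 and l=0 and m=k and n=l] by simp
  then have "w3 (x + ?\<gamma>) = w3 x" for x by (rule w_translation) simp_all
  then show ?thesis by (intro seg_avg_translate torus_avg_translate)
qed

lemma contradiction: False
proof -
  obtain \<kappa>1 \<kappa>2 where "ez1 = \<kappa>1 *\<^sub>R za + \<kappa>2 *\<^sub>R zb"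
    using plane_span[OF P_invertible] unfolding ez1_def by blast
  moreover have "has_cont_dir_deriv (seg_avg ex (yavg w3)) ez1 (seg_avg ex (yavg (dir_deriv w3 ez1)))"
    by (intro has_cont_dir_deriv_seg_avg has_cont_dir_deriv_torus_avg has_cont_dir_deriv_dir_deriv C1_fun_w)
  ultimately obtain p where "seg_avg ex (yavg (dir_deriv w3 ez1)) p = 0"
    using doubly_periodic_critical_point x_avg_w3_z_periodic by metis
  with x_avg_dir_deriv_w3_neg[of p] show False by simp
qed

end

theorem mainTheorem5:
  fixes B :: "int^2^2" and P :: "real^2^2" and a0 :: real
    and J :: "real^6 \<Rightarrow> real^6 \<Rightarrow> real^6"
  assumes "det B = 1"
    and "a0 > 0"
    and "invertible P"
    and "P ** (\<chi> i j. real_of_int (B$i$j)) ** matrix_inv P =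
           (\<chi> i j. if i = j then (if i = 0 then exp a0 else exp (- a0)) else 0)"
    and "\<forall>p v k. k \<in> {1,2,3} \<longrightarrow> Phi k p (J p v) = \<i> * Phi k p v"
  shows "\<not> (\<exists>\<omega>. compatible_symplectic (Gamma a0 P) J \<omega>)"
proof
  assume "\<exists>\<omega>. compatible_symplectic (Gamma a0 P) J \<omega>"
  then obtain \<omega> where "compatible_symplectic (Gamma a0 P) J \<omega>" ..
  then interpret compatible_form \<omega> a0 P J
    using assms(3,5) by unfold_locales
  show False by (rule contradiction)
qed

end
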